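(* Let $C_\lambda$ be the power-divergence copula and let $\mathcal{Z}(C_\lambda)=\{(u_1,u_2)\in[0,1]^2: C_\lambda(u_1,u_2)=0\}$ be its zero set. (i) If $\lambda\le -1$, then $\mathcal{Z}(C_\lambda)=\{(u_1,0):u_1\in[0,1]\}\cup\{(0,u_2):u_2\in[0,1]\}$. (ii) If $\lambda>-1$, then $\mathcal{Z}(C_\lambda)$ has positive (Lebesgue) area. (iii) As $\lambda\to\infty$, the zero set tends to the triangle $T$ with vertices $(0,0),(0,1),(1,0)$, in the sense that every $(u_1,u_2)\in[0,1]^2$ with $u_1+u_2<1$ belongs to $\mathcal{Z}(C_\lambda)$ for all sufficiently large $\lambda$, and every $(u_1,u_2)\in[0,1]^2$ with $u_1+u_2>1$ does not belong to $\mathcal{Z}(C_\lambda)$ for all sufficiently large $\lambda$; the boundary curve $\phi_\lambda(u_1)+\phi_\lambda(u_2)=\phi_\lambda(0)$ converges to the line $u_1+u_2=1$.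
   Context: For $\lambda\in\mathbb{R}$ define $\phi_\lambda$ on $[0,\infty)$ by $\phi_\lambda(x)=\frac{1}{\lambda(\lambda+1)}(x^{\lambda+1}-x+\lambda(1-x))$ for $\lambda\neq-1,0$; $\phi_0(x)=1-x+x\log x$; $\phi_{-1}(x)=x-1-\log x$; values at $x=0$ are limits, so $\phi_\lambda(0)=1/(\lambda+1)$ for $\lambda>-1$ and $\phi_\lambda(0)=\infty$ for $\lambda\le-1$. On $[0,1]$, $\phi_\lambda$ is convex, strictly decreasing, $\phi_\lambda(1)=0$. The pseudoinverse is $\phi_\lambda^{[-1]}(t)=\phi_\lambda^{-1}(t)$ (inverse of $\phi_\lambda|_{[0,1]}$) for $0\le t<\phi_\lambda(0)$ and $0$ for $t\ge\phi_\lambda(0)$. The power-divergence (PD) copula is $C_\lambda(u_1,u_2)=\phi_\lambda^{[-1]}(\phi_\lambda(u_1)+\phi_\lambda(u_2))$, $u_1,u_2\in[0,1]$ (with $\phi_\lambda^{[-1]}(\infty)=0$). *)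

theory Defs
  imports "HOL-Analysis.Analysis"
begin

text \<open>The generator phi_lambda on [0,1], extended-real valued so that phi_lambda(0) = infinity
  for lambda <= -1. Values at x = 0 are the limits given in the paper.\<close>
definition pd_phi :: "real \<Rightarrow> real \<Rightarrow> ereal" where
  "pd_phi l x =
     (if x = 0 then (if l > -1 then ereal (1 / (l + 1)) else \<infinity>)
      else if l = 0 then ereal (1 - x + x * ln x)
      else if l = -1 then ereal (x - 1 - ln x)
      else ereal ((x powr (l + 1) - x + l * (1 - x)) / (l * (l + 1))))"

definition pd_pinv :: "real \<Rightarrow> ereal \<Rightarrow> real" where
  "pd_pinv l t =
     (if t < pd_phi l 0 then (THE x. x \<in> {0..1} \<and> pd_phi l x = t) else 0)"

definition pd_copula :: "real \<Rightarrow> real \<Rightarrow> real \<Rightarrow> real" where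
  "pd_copula l u1 u2 = pd_pinv l (pd_phi l u1 + pd_phi l u2)"

definition pd_zeroset :: "real \<Rightarrow> (real \<times> real) set" where
  "pd_zeroset l = {(u1, u2). u1 \<in> {0..1} \<and> u2 \<in> {0..1} \<and> pd_copula l u1 u2 = 0}"

definition pd_curve :: "real \<Rightarrow> (real \<times> real) set" where
  "pd_curve l = {(u1, u2). u1 \<in> {0..1} \<and> u2 \<in> {0..1} \<and>
                   pd_phi l u1 + pd_phi l u2 = pd_phi l 0}"

end

theory Submission
  imports Defs "HOL-Real_Asymp.Real_Asymp"
begin

text \<open>On \<open>(0, 1]\<close> the generator is a real function, strictly decreasing from its right limit
  \<open>\<phi>(0)\<close> at \<open>0\<close> (which is \<open>\<infinity>\<close> for \<open>\<lambda> \<le> -1\<close>) down to \<open>\<phi>(1) = 0\<close>; so it maps \<open>(0, 1]\<close> onto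
  \<open>[0, \<phi>(0))\<close>, and \<open>C(u1, u2) = 0\<close> exactly when \<open>\<phi>(u1) + \<phi>(u2) \<ge> \<phi>(0)\<close>.
  For \<open>\<lambda> \<le> -1\<close> this forces \<open>u1 = 0\<close> or \<open>u2 = 0\<close>; for \<open>\<lambda> > -1\<close> it holds on a whole square
  \<open>[0, a]\<^sup>2\<close> with \<open>\<phi>(a) \<ge> \<phi>(0) / 2\<close>. For \<open>\<lambda> > 0\<close> the quantity
  \<open>\<lambda>(\<lambda>+1)(\<phi>(u1) + \<phi>(u2) - \<phi>(0)) = u1\<^bsup>\<lambda>+1\<^esup> + u2\<^bsup>\<lambda>+1\<^esup> - u1 - u2 + \<lambda>(1 - u1 - u2)\<close>
  differs from \<open>\<lambda>(1 - u1 - u2)\<close> by at most \<open>2\<close>, and its sign decides membership in the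
  zero set and in the boundary curve; letting \<open>\<lambda> \<rightarrow> \<infinity>\<close> gives (iii).\<close>

definition pd_gen :: "real \<Rightarrow> real \<Rightarrow> real" where
  "pd_gen l x =
     (if l = 0 then 1 - x + x * ln x
      else if l = -1 then x - 1 - ln x
      else (x powr (l + 1) - x + l * (1 - x)) / (l * (l + 1)))"

definition pd_gen_deriv :: "real \<Rightarrow> real \<Rightarrow> real" where
  "pd_gen_deriv l x = (if l = 0 then ln x else if l = -1 then 1 - 1 / x else (x powr l - 1) / l)"

text \<open>The case \<open>x = 0\<close>, \<open>l > -1\<close> holds because \<open>0 * ln 0 = 0\<close> and \<open>0 powr a = 0\<close> make the
  formula evaluate to \<open>1 / (l + 1)\<close> there.\<close>
lemma pd_phi_eq_pd_gen: "x \<noteq> 0 \<or> l > -1 \<Longrightarrow> pd_phi l x = ereal (pd_gen l x)"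
  by (auto simp: pd_phi_def pd_gen_def)

lemma pd_phi_0_eq_infinity: "l \<le> -1 \<Longrightarrow> pd_phi l 0 = \<infinity>"
  by (simp add: pd_phi_def)

lemma pd_gen_1 [simp]: "pd_gen l 1 = 0"
  by (simp add: pd_gen_def)

lemma pd_gen_has_real_derivative:
  assumes "0 < x"
  shows "(pd_gen l has_real_derivative pd_gen_deriv l x) (at x)"
proof -
  consider "l = 0" | "l = -1" | "l \<noteq> 0" "l + 1 \<noteq> 0" by fastforce
  then show ?thesis
  proof cases
    case 1
    have "((\<lambda>x. 1 - x + x * ln x) has_real_derivative ln x) (at x)"
      using assms by (auto intro!: derivative_eq_intros)
    then show ?thesis using 1 by (simp add: pd_gen_def[abs_def] pd_gen_deriv_def)
  next
    case 2
    have "((\<lambda>x. x - 1 - ln x) has_real_derivative 1 - 1 / x) (at x)"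
      using assms by (auto intro!: derivative_eq_intros)
    then show ?thesis using 2 by (simp add: pd_gen_def[abs_def] pd_gen_deriv_def)
  next
    case 3
    have "((\<lambda>x. (x powr (l + 1) - x + l * (1 - x)) / (l * (l + 1))) has_real_derivative
        ((l + 1) * x powr (l + 1 - 1) - 1 + l * (0 - 1)) / (l * (l + 1))) (at x)"
      using assms 3 by (auto intro!: derivative_eq_intros)
    moreover have "(l + 1) * x powr (l + 1 - 1) - 1 + l * (0 - 1) = (l + 1) * (x powr l - 1)"
      by (simp add: algebra_simps)
    ultimately show ?thesis using 3 by (simp add: pd_gen_def[abs_def] pd_gen_deriv_def)
  qed
qed

lemma pd_gen_deriv_neg:
  assumes "0 < x" "x < 1"
  shows "pd_gen_deriv l x < 0"
proof -
  consider "l = 0" | "l = -1" | "l > 0" | "l < 0" "l \<noteq> -1" by fastforce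
  then show ?thesis
  proof cases
    case 3
    then have "x powr l < 1" using assms powr_less_mono2[of l x 1] by simp
    then show ?thesis using 3 by (simp add: pd_gen_deriv_def divide_neg_pos)
  next
    case 4
    then have "1 < x powr l" using assms powr_less_mono2_neg[of l x 1] by simp
    then show ?thesis using 4 by (simp add: pd_gen_deriv_def divide_pos_neg)
  qed (use assms in \<open>auto simp: pd_gen_deriv_def\<close>)
qed

lemma pd_gen_tendsto_at_right_0:
  assumes "l > -1"
  shows "(pd_gen l \<longlongrightarrow> pd_gen l 0) (at_right 0)"
proof (cases "l = 0")
  case True
  have "((\<lambda>x::real. 1 - x + x * ln x) \<longlongrightarrow> 1) (at_right 0)"
    by real_asymp
  then show ?thesis using True by (simp add: pd_gen_def[abs_def])
next
  case False
  have "((\<lambda>x::real. x powr (l + 1)) \<longlongrightarrow> 0) (at_right 0)"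
    using assms by real_asymp
  then have "((\<lambda>x. (x powr (l + 1) - x + l * (1 - x)) / (l * (l + 1))) \<longlongrightarrow>
      (0 - 0 + l * (1 - 0)) / (l * (l + 1))) (at_right 0)"
    using assms False by (intro tendsto_intros) auto
  then show ?thesis using assms False by (simp add: pd_gen_def[abs_def])
qed

lemma pd_gen_at_right_0_at_top:
  assumes "l \<le> -1"
  shows "filterlim (pd_gen l) at_top (at_right 0)"
proof (cases "l = -1")
  case True
  have "filterlim (\<lambda>x::real. x - 1 - ln x) at_top (at_right 0)"
    by real_asymp
  then show ?thesis using True by (simp add: pd_gen_def[abs_def])
next
  case False
  then have "l < -1" "l * (l + 1) > 0"
    using assms by (auto simp: mult_neg_neg)
  have "filterlim (\<lambda>x::real. x powr (l + 1)) at_top (at_right 0)"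
    using \<open>l < -1\<close> by real_asymp
  then have "filterlim (\<lambda>x. (l - (l + 1) * x) + x powr (l + 1)) at_top (at_right 0)"
    by (intro filterlim_tendsto_add_at_top[where c = l]) (auto intro!: tendsto_eq_intros)
  then have "filterlim (\<lambda>x. inverse (l * (l + 1)) * ((l - (l + 1) * x) + x powr (l + 1)))
      at_top (at_right 0)"
    by (rule filterlim_tendsto_pos_mult_at_top[OF tendsto_const
          positive_imp_inverse_positive[OF \<open>l * (l + 1) > 0\<close>]])
  then show ?thesis using assms False
    by (simp add: pd_gen_def[abs_def] divide_inverse_commute algebra_simps)
qed

lemma pd_gen_continuous_on:
  assumes "0 < a"
  shows "continuous_on {a..b} (pd_gen l)"
  using assms
  by (intro continuous_at_imp_continuous_on ballI DERIV_isCont[OF pd_gen_has_real_derivative]) auto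

lemma pd_gen_strict_antimono:
  assumes "0 \<le> x" "x < y" "y \<le> 1" and "0 < x \<or> -1 < l"
  shows "pd_gen l y < pd_gen l x"
proof -
  have cont: "isCont (pd_gen l) z" if "0 < z" for z
    using DERIV_isCont[OF pd_gen_has_real_derivative[OF that]] .
  have "continuous_on {x..y} (pd_gen l)"
  proof (cases "0 < x")
    case True
    then show ?thesis by (rule pd_gen_continuous_on)
  next
    case False
    with assms have "x = 0" "-1 < l" by auto
    show ?thesis
      unfolding \<open>x = 0\<close>
    proof (rule continuous_on_IccI)
      show "(pd_gen l \<longlongrightarrow> pd_gen l 0) (at_right 0)"
        using \<open>-1 < l\<close> by (rule pd_gen_tendsto_at_right_0)
      show "(pd_gen l \<longlongrightarrow> pd_gen l y) (at_left y)"
        using cont[of y] assms \<open>x = 0\<close> by (auto simp: isCont_def intro: tendsto_mono at_le)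
    qed (use cont assms \<open>x = 0\<close> in \<open>auto simp: isCont_def\<close>)
  qed
  then show ?thesis
    using assms
    by (intro DERIV_neg_imp_decreasing_open[OF assms(2)])
      (auto intro!: exI pd_gen_has_real_derivative pd_gen_deriv_neg)
qed

lemma pd_phi_strict_antimono:
  assumes "0 \<le> x" "x < y" "y \<le> 1"
  shows "pd_phi l y < pd_phi l x"
proof (cases "0 < x \<or> -1 < l")
  case True
  then show ?thesis
    using assms pd_gen_strict_antimono[OF assms True] by (auto simp: pd_phi_eq_pd_gen)
next
  case False
  then show ?thesis using assms by (auto simp: pd_phi_0_eq_infinity pd_phi_eq_pd_gen)
qed

lemma pd_phi_antimono: "0 \<le> x \<Longrightarrow> x \<le> y \<Longrightarrow> y \<le> 1 \<Longrightarrow> pd_phi l y \<le> pd_phi l x"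
  using pd_phi_strict_antimono[of x y l] by (cases "x = y") auto

lemma pd_phi_nonneg: "0 \<le> x \<Longrightarrow> x \<le> 1 \<Longrightarrow> 0 \<le> pd_phi l x"
  using pd_phi_antimono[of x 1 l] by (simp add: pd_phi_eq_pd_gen zero_ereal_def)

lemma inj_on_pd_phi: "inj_on (pd_phi l) {0..1}"
proof (rule inj_onI)
  fix x y assume "x \<in> {0..1}" "y \<in> {0..1}" "pd_phi l x = pd_phi l y"
  then show "x = y"
    using pd_phi_strict_antimono[of x y l] pd_phi_strict_antimono[of y x l]
    by (cases x y rule: linorder_cases) auto
qed

lemma pd_phi_tendsto_at_right_0: "(pd_phi l \<longlongrightarrow> pd_phi l 0) (at_right 0)"
proof -
  have "\<forall>\<^sub>F x in at_right 0. ereal (pd_gen l x) = pd_phi l x"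
    using eventually_at_right_less[of 0] by eventually_elim (simp add: pd_phi_eq_pd_gen)
  moreover have "((\<lambda>x. ereal (pd_gen l x)) \<longlongrightarrow> pd_phi l 0) (at_right 0)"
  proof (cases "-1 < l")
    case True
    then show ?thesis
      by (simp add: pd_phi_eq_pd_gen pd_gen_tendsto_at_right_0)
  next
    case False
    then show ?thesis
      by (simp add: pd_phi_0_eq_infinity tendsto_PInfty_eq_at_top pd_gen_at_right_0_at_top)
  qed
  ultimately show ?thesis by (rule tendsto_cong[THEN iffD1])
qed

lemma pd_phi_gt_near_0:
  assumes "t < pd_phi l 0"
  obtains a where "0 < a" "a \<le> 1" "t < pd_phi l a"
proof -
  have "\<forall>\<^sub>F x in at_right 0. t < pd_phi l x"
    using order_tendstoD(1)[OF pd_phi_tendsto_at_right_0 assms] .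
  then obtain b where "b > 0" and b: "\<And>x. 0 < x \<Longrightarrow> x < b \<Longrightarrow> t < pd_phi l x"
    by (auto simp: eventually_at_right_field)
  show ?thesis
    using that[of "min (b / 2) 1"] b[of "min (b / 2) 1"] \<open>b > 0\<close> by auto
qed

lemma pd_phi_surj:
  assumes "0 \<le> t" "ereal t < pd_phi l 0"
  obtains x where "0 < x" "x \<le> 1" "pd_phi l x = ereal t"
proof -
  obtain a where a: "0 < a" "a \<le> 1" "ereal t < pd_phi l a"
    using pd_phi_gt_near_0[OF assms(2)] .
  then have "pd_gen l 1 \<le> t" "t \<le> pd_gen l a"
    using assms by (auto simp: pd_phi_eq_pd_gen)
  then obtain x where "a \<le> x" "x \<le> 1" "pd_gen l x = t"
    using IVT2'[OF _ _ _ pd_gen_continuous_on[OF \<open>0 < a\<close>]] a(2) by blast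
  then show ?thesis
    using that[of x] a by (simp add: pd_phi_eq_pd_gen)
qed

lemma pd_copula_eq_0_iff:
  assumes "u1 \<in> {0..1}" "u2 \<in> {0..1}"
  shows "pd_copula l u1 u2 = 0 \<longleftrightarrow> pd_phi l 0 \<le> pd_phi l u1 + pd_phi l u2"
proof
  assume "pd_phi l 0 \<le> pd_phi l u1 + pd_phi l u2"
  then show "pd_copula l u1 u2 = 0" by (simp add: pd_copula_def pd_pinv_def)
next
  assume copula_0: "pd_copula l u1 u2 = 0"
  show "pd_phi l 0 \<le> pd_phi l u1 + pd_phi l u2"
  proof (rule ccontr)
    define s where "s = pd_phi l u1 + pd_phi l u2"
    assume "\<not> pd_phi l 0 \<le> pd_phi l u1 + pd_phi l u2"
    then have "s < pd_phi l 0" by (simp add: s_def)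
    moreover have "0 \<le> s"
      using assms by (simp add: s_def pd_phi_nonneg)
    ultimately obtain t where "s = ereal t" "0 \<le> t"
      by (cases s) auto
    then obtain x where x: "0 < x" "x \<le> 1" "pd_phi l x = s"
      using pd_phi_surj \<open>s < pd_phi l 0\<close> by metis
    have "(THE y. y \<in> {0..1} \<and> pd_phi l y = s) = x"
      using x inj_on_pd_phi[of l] by (intro the_equality) (auto dest: inj_onD)
    then have "pd_copula l u1 u2 = x"
      using \<open>s < pd_phi l 0\<close> by (simp add: pd_copula_def pd_pinv_def s_def)
    then show False using copula_0 x by simp
  qed
qed

lemma pd_zeroset_eq:
  "pd_zeroset l = {p \<in> {0..1} \<times> {0..1}. pd_phi l 0 \<le> pd_phi l (fst p) + pd_phi l (snd p)}"
  by (auto simp: pd_zeroset_def pd_copula_eq_0_iff)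

lemma pd_zeroset_le_minus_one:
  assumes "l \<le> -1"
  shows "pd_zeroset l = {(u1, 0) | u1. u1 \<in> {0..1}} \<union> {(0, u2) | u2. u2 \<in> {0..1}}"
proof -
  have infinite_iff: "pd_phi l x = \<infinity> \<longleftrightarrow> x = 0" for x
    using assms by (cases "x = 0") (auto simp: pd_phi_0_eq_infinity pd_phi_eq_pd_gen)
  have "(u1, u2) \<in> pd_zeroset l \<longleftrightarrow> u1 \<in> {0..1} \<and> u2 \<in> {0..1} \<and> (u1 = 0 \<or> u2 = 0)"
    for u1 u2
  proof (cases "u1 \<in> {0..1} \<and> u2 \<in> {0..1}")
    case True
    then have "\<infinity> \<le> pd_phi l u1 + pd_phi l u2 \<longleftrightarrow> pd_phi l u1 = \<infinity> \<or> pd_phi l u2 = \<infinity>"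
      using pd_phi_nonneg[of u1 l] pd_phi_nonneg[of u2 l] by (auto simp: top_unique ereal_plus_eq_PInfty)
    then show ?thesis
      using True assms by (simp add: pd_zeroset_eq pd_phi_0_eq_infinity infinite_iff)
  qed (auto simp: pd_zeroset_def)
  then show ?thesis by auto
qed

lemma pd_zeroset_sets: "pd_zeroset l \<in> sets lborel"
proof -
  have [measurable]: "pd_phi l \<in> borel_measurable borel"
    unfolding pd_phi_def by measurable
  have [measurable]: "fst \<in> borel_measurable (borel :: (real \<times> real) measure)"
    "snd \<in> borel_measurable (borel :: (real \<times> real) measure)"
    by (intro borel_measurable_continuous_onI continuous_intros)+
  have "Measurable.pred borel (\<lambda>p::real \<times> real. fst p \<in> {0..1} \<and> snd p \<in> {0..1} \<and>
      pd_phi l 0 \<le> pd_phi l (fst p) + pd_phi l (snd p))"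
    by measurable
  then show ?thesis
    by (simp add: pred_def pd_zeroset_eq mem_Times_iff conj_assoc)
qed

lemma pd_zeroset_emeasure_pos:
  assumes "l > -1"
  shows "0 < emeasure lborel (pd_zeroset l)"
proof -
  define q where "q = 1 / (l + 1)"
  have "q > 0" "pd_phi l 0 = ereal q"
    using assms by (simp_all add: q_def pd_phi_def)
  then obtain a where a: "0 < a" "a \<le> 1" "ereal (q / 2) < pd_phi l a"
    using pd_phi_gt_near_0[of "ereal (q / 2)" l] by auto
  have square: "{0..a} \<times> {0..a} \<subseteq> pd_zeroset l"
  proof safe
    fix u1 u2 assume u: "u1 \<in> {0..a}" "u2 \<in> {0..a}"
    then have "ereal (q / 2) \<le> pd_phi l u1" "ereal (q / 2) \<le> pd_phi l u2"
      using a pd_phi_antimono[of _ a l] by (auto intro: order.trans[OF less_imp_le])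
    then have "pd_phi l 0 \<le> pd_phi l u1 + pd_phi l u2"
      using \<open>pd_phi l 0 = ereal q\<close> add_mono by fastforce
    then show "(u1, u2) \<in> pd_zeroset l"
      using u a by (auto simp: pd_zeroset_eq)
  qed
  have "emeasure lborel ({0..a} \<times> {0..a}) = ennreal (a * a)"
  proof -
    have "{0..a} \<times> {0..a} = cbox (0, 0) (a, a)"
      by (simp add: cbox_Pair_eq)
    moreover have "emeasure lborel (cbox (0::real, 0::real) (a, a)) = ennreal (a * a)"
      using a by (subst emeasure_lborel_cbox) (auto simp: Basis_prod_def inner_prod_def ennreal_mult)
    ultimately show ?thesis by simp
  qed
  then have "0 < emeasure lborel ({0..a} \<times> {0..a})"
    using a by simp
  also have "\<dots> \<le> emeasure lborel (pd_zeroset l)"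
    by (rule emeasure_mono[OF square pd_zeroset_sets])
  finally show ?thesis .
qed

definition pd_excess :: "real \<Rightarrow> real \<Rightarrow> real \<Rightarrow> real" where
  "pd_excess l u v = u powr (l + 1) + v powr (l + 1) - u - v + l * (1 - u - v)"

lemma pd_gen_add_eq:
  assumes "l \<noteq> 0" "l \<noteq> -1"
  shows "pd_gen l u + pd_gen l v = pd_gen l 0 + pd_excess l u v / (l * (l + 1))"
proof -
  have "l + 1 \<noteq> 0" using assms(2) by linarith
  with assms show ?thesis
    by (simp add: pd_gen_def pd_excess_def divide_simps) (simp add: algebra_simps)
qed

lemma pd_phi_add_ge_iff:
  assumes "l > 0"
  shows "pd_phi l 0 \<le> pd_phi l u + pd_phi l v \<longleftrightarrow> 0 \<le> pd_excess l u v"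
proof -
  have "0 < l * (l + 1)" using assms by simp
  then show ?thesis
    using assms pd_gen_add_eq[of l u v] by (simp add: pd_phi_eq_pd_gen zero_le_divide_iff mult_le_0_iff)
qed

lemma pd_phi_add_eq_iff:
  assumes "l > 0"
  shows "pd_phi l u + pd_phi l v = pd_phi l 0 \<longleftrightarrow> pd_excess l u v = 0"
  using assms pd_gen_add_eq[of l u v]
  by (simp add: pd_phi_eq_pd_gen)

lemma pd_excess_lower:
  assumes "u \<le> 1" "v \<le> 1"
  shows "l * (1 - u - v) - 2 \<le> pd_excess l u v"
  using assms powr_ge_zero[of u "l + 1"] powr_ge_zero[of v "l + 1"]
  unfolding pd_excess_def by linarith

lemma pd_excess_upper:
  assumes "0 \<le> l" "u \<in> {0..1}" "v \<in> {0..1}"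
  shows "pd_excess l u v \<le> l * (1 - u - v)"
proof -
  have powr_le: "x powr (l + 1) \<le> x" if "x \<in> {0..1}" for x
    using that assms(1) by (cases "x = 0") (auto intro: powr_le_one_le)
  show ?thesis
    using powr_le[OF assms(2)] powr_le[OF assms(3)] by (simp add: pd_excess_def)
qed

lemma eventually_mem_pd_zeroset:
  assumes "u1 \<in> {0..1}" "u2 \<in> {0..1}" "u1 + u2 < 1"
  shows "\<forall>\<^sub>F l in at_top. (u1, u2) \<in> pd_zeroset l"
  using eventually_ge_at_top[of "max 1 (2 / (1 - u1 - u2))"]
proof eventually_elim
  case (elim l)
  then have "2 \<le> l * (1 - u1 - u2)"
    using assms by (simp add: divide_le_eq mult.commute)
  then have "0 \<le> pd_excess l u1 u2"
    using pd_excess_lower[of u1 u2 l] assms by simp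
  then show ?case
    using elim assms by (simp add: pd_zeroset_eq pd_phi_add_ge_iff)
qed

lemma eventually_not_mem_pd_zeroset:
  assumes "u1 \<in> {0..1}" "u2 \<in> {0..1}" "u1 + u2 > 1"
  shows "\<forall>\<^sub>F l in at_top. (u1, u2) \<notin> pd_zeroset l"
  using eventually_gt_at_top[of 0]
proof eventually_elim
  case (elim l)
  then have "pd_excess l u1 u2 < 0"
    using pd_excess_upper[of l u1 u2] assms mult_pos_neg[of l "1 - u1 - u2"] by simp
  then show ?case
    using elim by (simp add: pd_zeroset_eq pd_phi_add_ge_iff)
qed

lemma pd_curve_near_antidiagonal:
  assumes "l > 0" "(u1, u2) \<in> pd_curve l"
  shows "l * \<bar>u1 + u2 - 1\<bar> \<le> 2"
proof -
  have "u1 \<in> {0..1}" "u2 \<in> {0..1}" "pd_excess l u1 u2 = 0"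
    using assms by (auto simp: pd_curve_def pd_phi_add_eq_iff)
  then have "0 \<le> l * (1 - u1 - u2)" "l * (1 - u1 - u2) \<le> 2"
    using pd_excess_lower[of u1 u2 l] pd_excess_upper[of l u1 u2] assms(1) by auto
  then show ?thesis
    using assms(1) by (auto simp: abs_if algebra_simps)
qed

lemma pd_curve_section_nonempty:
  assumes "l > 0" "u \<in> {0..1}"
  obtains v where "(u, v) \<in> pd_curve l"
proof -
  have "continuous_on {0..1} (pd_excess l u)"
    unfolding pd_excess_def[abs_def] using assms(1)
    by (intro continuous_intros continuous_on_powr') auto
  moreover have "pd_excess l u 1 \<le> 0"
  proof -
    have "pd_excess l u 1 \<le> l * (1 - u - 1)"
      using pd_excess_upper[of l u 1] assms by simp
    also have "\<dots> \<le> 0"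
      using assms by simp
    finally show ?thesis .
  qed
  moreover have "0 \<le> pd_excess l u 0"
  proof -
    have "0 \<le> pd_gen l u"
      using pd_phi_nonneg[of u l] assms by (simp add: pd_phi_eq_pd_gen)
    then show ?thesis
      using pd_gen_add_eq[of l u 0] assms(1) by (simp add: zero_le_divide_iff mult_le_0_iff)
  qed
  ultimately obtain v where "0 \<le> v" "v \<le> 1" "pd_excess l u v = 0"
    using IVT2'[of "pd_excess l u" 1 0 0] by auto
  then show ?thesis
    using that[of v] assms by (simp add: pd_curve_def pd_phi_add_eq_iff)
qed

lemma eventually_pd_curve_near_antidiagonal:
  assumes "e > 0"
  shows "\<forall>\<^sub>F l in at_top.
    (\<forall>(u1, u2) \<in> pd_curve l. \<bar>u1 + u2 - 1\<bar> < e) \<and>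
    (\<forall>u1\<in>{0..1}. \<exists>(v1, v2) \<in> pd_curve l. dist (v1, v2) (u1, 1 - u1) < e)"
  using eventually_gt_at_top[of "max 0 (2 / e)"]
proof eventually_elim
  case (elim l)
  then have "l > 0" by simp
  have "2 < l * e"
    using elim assms by (simp add: divide_less_eq)
  have near: "\<bar>u1 + u2 - 1\<bar> < e" if "(u1, u2) \<in> pd_curve l" for u1 u2
  proof -
    have "l * \<bar>u1 + u2 - 1\<bar> < l * e"
      using pd_curve_near_antidiagonal[OF \<open>l > 0\<close> that] \<open>2 < l * e\<close> by linarith
    then show ?thesis using \<open>l > 0\<close> by simp
  qed
  have "\<exists>(v1, v2) \<in> pd_curve l. dist (v1, v2) (u1, 1 - u1) < e" if u1: "u1 \<in> {0..1}" for u1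
  proof -
    obtain v where v: "(u1, v) \<in> pd_curve l"
      using pd_curve_section_nonempty[OF \<open>l > 0\<close> u1] .
    have "dist (u1, v) (u1, 1 - u1) = \<bar>u1 + v - 1\<bar>"
      by (simp add: dist_Pair_Pair dist_real_def)
    then have "dist (u1, v) (u1, 1 - u1) < e"
      using near[OF v] by simp
    then show ?thesis using v by blast
  qed
  then show ?case using near by auto
qed

theorem theorem1:
  shows "(\<forall>l::real. l \<le> -1 \<longrightarrow>
            pd_zeroset l = {(u1, 0) | u1. u1 \<in> {0..1}} \<union> {(0, u2) | u2. u2 \<in> {0..1}})
       \<and> (\<forall>l::real. l > -1 \<longrightarrow> emeasure lborel (pd_zeroset l) > 0)
       \<and> (\<forall>u1 u2::real. u1 \<in> {0..1} \<and> u2 \<in> {0..1} \<and> u1 + u2 < 1 \<longrightarrow>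
            (\<forall>\<^sub>F l in at_top. (u1, u2) \<in> pd_zeroset l))
       \<and> (\<forall>u1 u2::real. u1 \<in> {0..1} \<and> u2 \<in> {0..1} \<and> u1 + u2 > 1 \<longrightarrow>
            (\<forall>\<^sub>F l in at_top. (u1, u2) \<notin> pd_zeroset l))
       \<and> (\<forall>e>0::real. \<forall>\<^sub>F l in at_top.
            (\<forall>(u1, u2) \<in> pd_curve l. \<bar>u1 + u2 - 1\<bar> < e) \<and>
            (\<forall>u1\<in>{0..1::real}. \<exists>(v1, v2) \<in> pd_curve l. dist (v1, v2) (u1, 1 - u1) < e))"
  using pd_zeroset_le_minus_one pd_zeroset_emeasure_pos eventually_mem_pd_zeroset
    eventually_not_mem_pd_zeroset eventually_pd_curve_near_antidiagonal
  by blast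

end
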